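(* Let $A$ be a finite ring with unity (not necessarily associative or commutative), let $E$ be a set, and consider the ring $A^E$ with pointwise operations. For $X\subseteq A^E$ set $\mathcal{R}(X)=X\cup\{-1,0,1\}\cup\{x+y : x,y\in X\}\cup\{xy : x,y\in X\}$. Let $(\mathscr{X}_i)_{i\in\mathbf{N}}$ be an increasing sequence of subsets of $A^E$ such that $\mathcal{R}(\mathscr{X}_i)\subseteq\mathscr{X}_{i+1}$ for all $i$ and $\bigcup_{i\in\mathbf{N}}\mathscr{X}_i=A^E$. Then $A^E=\mathscr{X}_i$ for some $i$. *)

theory Defs
  imports Main
begin

definition nonassoc_ring_1 :: "'a::{ab_group_add, times, one} itself \<Rightarrow> bool" where
  "nonassoc_ring_1 _ \<longleftrightarrow>
     (\<forall>x y z::'a. x * (y + z) = x * y + x * z) \<and>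
     (\<forall>x y z::'a. (x + y) * z = x * z + y * z) \<and>
     (\<forall>x::'a. 1 * x = x \<and> x * 1 = x)"

definition Rop :: "('e \<Rightarrow> 'a::{ab_group_add, times, one}) set \<Rightarrow> ('e \<Rightarrow> 'a) set" where
  "Rop X = X \<union> {(\<lambda>e. - 1), (\<lambda>e. 0), (\<lambda>e. 1)}
           \<union> {(\<lambda>e. x e + y e) | x y. x \<in> X \<and> y \<in> X}
           \<union> {(\<lambda>e. x e * y e) | x y. x \<in> X \<and> y \<in> X}"

end

theory Submission
  imports Defs "HOL-Library.Disjoint_Sets" "HOL-Library.Infinite_Set"
begin

text \<open>Say that T \<subseteq> E has a level if for some n every function supported in T lies in X_n;
it suffices to show that E has a level. Suppose not.

If every set without a level splits into two sets without a level, there are pairwise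
disjoint sets U_k without a level. Let 1_(U_k) \<in> X_(l_k) and choose g_k supported in U_k
but outside X_(1 + max k l_k). Gluing the g_k gives one function G, say G \<in> X_m; then
g_m = G \<cdot> 1_(U_m) \<in> X_(1 + max m l_m), a contradiction.

Otherwise some T without a level is indecomposable: every split of T has a part with a level.
Since A is finite, a function f supported in T is constant, say a, on some part F of T without
a level; then T - F has a level and f = f|(T - F) + a \<cdot> (1_T - 1_(T - F)). So if the subsets
of T having a level had a common level, T would have a level. Hence T contains pairwise
disjoint D_n with D_n not captured by X_n, and the unions of the D_n over even and over odd n
split T into two parts without a level.\<close>

lemma disjoint_family_from_splitting:
  fixes P :: "'a set \<Rightarrow> bool"
  assumes "P A" and split: "\<And>T. P T \<Longrightarrow> \<exists>S\<subseteq>T. P S \<and> P (T - S)"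
  shows "\<exists>U :: nat \<Rightarrow> 'a set. disjoint_family U \<and> (\<forall>k. P (U k))"
proof -
  define piece where "piece T = (SOME S. S \<subseteq> T \<and> P S \<and> P (T - S))" for T
  have piece: "piece T \<subseteq> T \<and> P (piece T) \<and> P (T - piece T)" if "P T" for T
    unfolding piece_def by (rule someI_ex[OF split[OF that]])
  define R where "R = rec_nat A (\<lambda>_ T. T - piece T)"
  have R_0: "R 0 = A" and R_Suc: "R (Suc k) = R k - piece (R k)" for k
    unfolding R_def by simp_all
  have P_R: "P (R k)" for k
    by (induction k) (use \<open>P A\<close> piece in \<open>auto simp: R_0 R_Suc\<close>)
  have R_antimono: "R j \<subseteq> R k" if "k \<le> j" for j k
    by (rule lift_Suc_antimono_le[of R, OF _ that]) (auto simp: R_Suc)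
  have "piece (R j) \<inter> piece (R k) = {}" if "k < j" for j k
  proof -
    have "piece (R j) \<subseteq> R (Suc k)"
      using piece[OF P_R, of j] R_antimono[OF Suc_leI[OF that]] by blast
    then show ?thesis by (auto simp: R_Suc)
  qed
  then have "disjoint_family (\<lambda>k. piece (R k))"
    unfolding disjoint_family_on_def by (metis inf_commute linorder_neq_iff)
  then show ?thesis
    using piece[OF P_R] by blast
qed

lemma nonassoc_ring_1_mult_1_right:
  assumes "nonassoc_ring_1 TYPE('a::{ab_group_add, times, one})"
  shows "x * 1 = (x::'a)"
  using assms unfolding nonassoc_ring_1_def by auto

lemma nonassoc_ring_1_mult_zero_right:
  assumes "nonassoc_ring_1 TYPE('a::{ab_group_add, times, one})"
  shows "x * 0 = (0::'a)"
proof -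
  have "x * (0 + 0) = x * 0 + x * 0"
    using assms unfolding nonassoc_ring_1_def by blast
  then show ?thesis by simp
qed

lemma Rop_add_mem: "x \<in> X \<Longrightarrow> y \<in> X \<Longrightarrow> (\<lambda>e. x e + y e) \<in> Rop X"
  unfolding Rop_def by blast

lemma Rop_mult_mem: "x \<in> X \<Longrightarrow> y \<in> X \<Longrightarrow> (\<lambda>e. x e * y e) \<in> Rop X"
  unfolding Rop_def by blast

lemma Rop_minus_one: "(\<lambda>e. - 1) \<in> Rop X"
  and Rop_zero: "(\<lambda>e. 0) \<in> Rop X"
  unfolding Rop_def by blast+

definition char_fun :: "'e set \<Rightarrow> 'e \<Rightarrow> 'a::{zero, one}" where
  "char_fun T e = (if e \<in> T then 1 else 0)"

definition restr_zero :: "('e \<Rightarrow> 'a::zero) \<Rightarrow> 'e set \<Rightarrow> 'e \<Rightarrow> 'a" where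
  "restr_zero f T e = (if e \<in> T then f e else 0)"

locale Rop_chain =
  fixes Xs :: "nat \<Rightarrow> ('e \<Rightarrow> 'a::{ab_group_add, times, one, finite}) set"
  assumes ring: "nonassoc_ring_1 TYPE('a)"
    and Xs_Suc: "\<And>i. Xs i \<subseteq> Xs (Suc i)"
    and Rop_Xs: "\<And>i. Rop (Xs i) \<subseteq> Xs (Suc i)"
    and Xs_cover: "(\<Union>i. Xs i) = UNIV"
begin

lemmas ring_mult_1_right = nonassoc_ring_1_mult_1_right[OF ring]
lemmas ring_mult_zero_right = nonassoc_ring_1_mult_zero_right[OF ring]

lemma Xs_mono: "n \<le> m \<Longrightarrow> Xs n \<subseteq> Xs m"
  by (rule lift_Suc_mono_le[of Xs]) (use Xs_Suc in auto)

lemma Xs_add_mem: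
  assumes "f \<in> Xs n" "g \<in> Xs m" "n \<le> k" "m \<le> k"
  shows "(\<lambda>e. f e + g e) \<in> Xs (Suc k)"
proof -
  have "f \<in> Xs k" "g \<in> Xs k" using assms Xs_mono by blast+
  then show ?thesis using Rop_Xs[of k] Rop_add_mem by blast
qed

lemma Xs_mult_mem:
  assumes "f \<in> Xs n" "g \<in> Xs m" "n \<le> k" "m \<le> k"
  shows "(\<lambda>e. f e * g e) \<in> Xs (Suc k)"
proof -
  have "f \<in> Xs k" "g \<in> Xs k" using assms Xs_mono by blast+
  then show ?thesis using Rop_Xs[of k] Rop_mult_mem by blast
qed

lemma Xs_minus_one: "(\<lambda>e. - 1) \<in> Xs (Suc n)"
  and Xs_zero: "(\<lambda>e. 0) \<in> Xs (Suc n)"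
  using Rop_Xs[of n] Rop_minus_one Rop_zero by blast+

definition level_of :: "('e \<Rightarrow> 'a) \<Rightarrow> nat" where
  "level_of f = (LEAST n. f \<in> Xs n)"

lemma mem_Xs_level_of: "f \<in> Xs (level_of f)"
  unfolding level_of_def by (rule LeastI_ex) (use Xs_cover in blast)

lemma constants_common_level: "\<exists>c. \<forall>a. (\<lambda>_::'e. a) \<in> Xs c"
proof -
  define c where "c = Max (range (\<lambda>a. level_of (\<lambda>_::'e. a)))"
  have "level_of (\<lambda>_::'e. a) \<le> c" for a
    unfolding c_def by (rule Max_ge) auto
  then show ?thesis
    using mem_Xs_level_of Xs_mono by blast
qed

lemma restr_zero_eq_mult_char_fun: "restr_zero (f :: 'e \<Rightarrow> 'a) T = (\<lambda>e. f e * char_fun T e)"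
  by (auto simp: restr_zero_def char_fun_def fun_eq_iff ring_mult_zero_right ring_mult_1_right)

definition full_at :: "nat \<Rightarrow> 'e set \<Rightarrow> bool" where
  "full_at n T \<longleftrightarrow> (\<forall>f. (\<forall>e. e \<notin> T \<longrightarrow> f e = 0) \<longrightarrow> f \<in> Xs n)"

definition has_level :: "'e set \<Rightarrow> bool" where
  "has_level T \<longleftrightarrow> (\<exists>n. full_at n T)"

definition indecomposable :: "'e set \<Rightarrow> bool" where
  "indecomposable T \<longleftrightarrow> \<not> has_level T \<and> (\<forall>S\<subseteq>T. has_level S \<or> has_level (T - S))"

lemma full_at_subset: "full_at n T \<Longrightarrow> S \<subseteq> T \<Longrightarrow> full_at n S"
  unfolding full_at_def by blast

lemma full_at_mono: "full_at n T \<Longrightarrow> n \<le> m \<Longrightarrow> full_at m T"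
  unfolding full_at_def using Xs_mono by blast

lemma full_at_restr_zero: "full_at n T \<Longrightarrow> restr_zero f T \<in> Xs n"
  unfolding full_at_def restr_zero_def by auto

lemma full_at_char_fun: "full_at n T \<Longrightarrow> char_fun T \<in> Xs n"
  unfolding full_at_def char_fun_def by auto

lemma full_at_Un:
  assumes "full_at n T" "full_at m T'"
  shows "full_at (Suc (max n m)) (T \<union> T')"
  unfolding full_at_def
proof (intro allI impI)
  fix f :: "'e \<Rightarrow> 'a"
  assume "\<forall>e. e \<notin> T \<union> T' \<longrightarrow> f e = 0"
  then have "f = (\<lambda>e. restr_zero f T e + restr_zero f (T' - T) e)"
    by (auto simp: restr_zero_def fun_eq_iff)
  moreover have "restr_zero f T \<in> Xs n" "restr_zero f (T' - T) \<in> Xs m"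
    using assms full_at_subset[of m T' "T' - T"] by (auto intro: full_at_restr_zero)
  then have "(\<lambda>e. restr_zero f T e + restr_zero f (T' - T) e) \<in> Xs (Suc (max n m))"
    by (rule Xs_add_mem) auto
  ultimately show "f \<in> Xs (Suc (max n m))" by simp
qed

lemma has_level_Un: "has_level T \<Longrightarrow> has_level T' \<Longrightarrow> has_level (T \<union> T')"
  unfolding has_level_def using full_at_Un by blast

lemma has_level_subset: "has_level T \<Longrightarrow> S \<subseteq> T \<Longrightarrow> has_level S"
  unfolding has_level_def using full_at_subset by blast

lemma has_level_empty: "has_level {}"
proof -
  have "f \<in> Xs (Suc 0)" if "\<forall>e. e \<notin> {} \<longrightarrow> f e = 0" for f
  proof -
    have "f = (\<lambda>e. 0)" using that by auto
    then show ?thesis using Xs_zero by simp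
  qed
  then show ?thesis unfolding has_level_def full_at_def by blast
qed

lemma has_level_UN_finite: "finite I \<Longrightarrow> (\<And>i. i \<in> I \<Longrightarrow> has_level (F i)) \<Longrightarrow> has_level (\<Union>i\<in>I. F i)"
  by (induction I rule: finite_induct) (auto simp: has_level_empty has_level_Un)

lemma UN_infinite_not_has_level:
  assumes D_high: "\<And>n. \<not> full_at n (D n)" and "infinite N"
  shows "\<not> has_level (\<Union>n\<in>N. D n)"
proof
  assume "has_level (\<Union>n\<in>N. D n)"
  then obtain m where m: "full_at m (\<Union>n\<in>N. D n)" unfolding has_level_def by blast
  obtain n where "n \<in> N" "m \<le> n"
    using \<open>infinite N\<close> unfolding infinite_nat_iff_unbounded_le by blast
  then have "full_at n (D n)"
    using full_at_subset[OF m] full_at_mono by blast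
  with D_high show False by blast
qed

lemma disjoint_family_has_level:
  fixes U :: "nat \<Rightarrow> 'e set"
  assumes disj: "disjoint_family U"
  shows "\<exists>k. has_level (U k)"
proof (rule ccontr)
  assume "\<nexists>k. has_level (U k)"
  then have "\<forall>k. \<exists>h. (\<forall>e. e \<notin> U k \<longrightarrow> h e = 0)
                 \<and> h \<notin> Xs (Suc (max k (level_of (char_fun (U k)))))"
    unfolding has_level_def full_at_def by blast
  then obtain g where g_supp: "\<And>k e. e \<notin> U k \<Longrightarrow> g k e = 0"
    and g_high: "\<And>k. g k \<notin> Xs (Suc (max k (level_of (char_fun (U k)))))"
    by metis
  \<comment> \<open>off \<Union>k. U k the choice of k is arbitrary, but every g k vanishes there\<close>
  define G where "G e = g (SOME k. e \<in> U k) e" for e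
  define m where "m = level_of G"
  have "restr_zero G (U m) = g m"
  proof
    fix e
    show "restr_zero G (U m) e = g m e"
    proof (cases "e \<in> U m")
      case True
      then have "e \<in> U (SOME k. e \<in> U k)" by (rule someI)
      with True disj have "(SOME k. e \<in> U k) = m"
        unfolding disjoint_family_on_def by blast
      with True show ?thesis by (simp add: restr_zero_def G_def)
    qed (simp add: restr_zero_def g_supp)
  qed
  moreover have "restr_zero G (U m) \<in> Xs (Suc (max m (level_of (char_fun (U m)))))"
    unfolding restr_zero_eq_mult_char_fun
    by (rule Xs_mult_mem[OF mem_Xs_level_of mem_Xs_level_of]) (auto simp: m_def)
  ultimately show False using g_high by simp
qed

lemma indecomposable_has_level_subset_not_full_at:
  assumes "indecomposable T"
  shows "\<exists>S\<subseteq>T. has_level S \<and> \<not> full_at M S"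
proof (rule ccontr)
  assume "\<not> ?thesis"
  then have full_M: "full_at M S" if "S \<subseteq> T" "has_level S" for S
    using that by blast
  obtain c where c: "\<And>a. (\<lambda>_. a) \<in> Xs c"
    using constants_common_level by blast
  define K where "K = max (max (level_of (char_fun T)) M) (max c 1)"
  have "full_at (Suc (Suc (Suc (Suc K)))) T"
    unfolding full_at_def
  proof (intro allI impI)
    fix f :: "'e \<Rightarrow> 'a"
    assume f_supp: "\<forall>e. e \<notin> T \<longrightarrow> f e = 0"
    define F where "F a = {e \<in> T. f e = a}" for a
    have "T = (\<Union>a\<in>UNIV. F a)"
      by (auto simp: F_def)
    then have "\<not> has_level (\<Union>a\<in>UNIV. F a)"
      using assms unfolding indecomposable_def by simp
    then obtain a where "\<not> has_level (F a)"
      using has_level_UN_finite[OF finite_UNIV, of F] by blast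
    moreover have "F a \<subseteq> T"
      by (auto simp: F_def)
    ultimately have "has_level (T - F a)"
      using assms unfolding indecomposable_def by blast
    then have "full_at M (T - F a)"
      by (rule full_M[OF Diff_subset])
    then have restr_mem: "restr_zero f (T - F a) \<in> Xs M"
      and compl_mem: "char_fun (T - F a) \<in> Xs M"
      by (rule full_at_restr_zero, rule full_at_char_fun)
    have "(\<lambda>e. - 1 * char_fun (T - F a) e) \<in> Xs (Suc K)"
      by (rule Xs_mult_mem[OF Xs_minus_one[of 0] compl_mem]) (auto simp: K_def)
    then have "(\<lambda>e. char_fun T e + - 1 * char_fun (T - F a) e) \<in> Xs (Suc (Suc K))"
      by (rule Xs_add_mem[OF mem_Xs_level_of]) (auto simp: K_def)
    moreover have "(\<lambda>e. char_fun T e + - 1 * char_fun (T - F a) e) = (char_fun (F a) :: 'e \<Rightarrow> 'a)"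
      by (auto simp: char_fun_def F_def fun_eq_iff ring_mult_zero_right ring_mult_1_right)
    ultimately have "char_fun (F a) \<in> Xs (Suc (Suc K))"
      by simp
    then have "(\<lambda>e. a * char_fun (F a) e) \<in> Xs (Suc (Suc (Suc K)))"
      by (rule Xs_mult_mem[OF c]) (auto simp: K_def)
    then have "(\<lambda>e. restr_zero f (T - F a) e + a * char_fun (F a) e) \<in> Xs (Suc (Suc (Suc (Suc K))))"
      by (rule Xs_add_mem[OF restr_mem]) (auto simp: K_def)
    moreover have "f = (\<lambda>e. restr_zero f (T - F a) e + a * char_fun (F a) e)"
      using f_supp
      by (auto simp: restr_zero_def char_fun_def F_def fun_eq_iff ring_mult_zero_right ring_mult_1_right)
    ultimately show "f \<in> Xs (Suc (Suc (Suc (Suc K))))"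
      by simp
  qed
  with assms show False
    unfolding indecomposable_def has_level_def by blast
qed

lemma indecomposable_disjoint_family_not_full_at:
  assumes "indecomposable T"
  obtains D :: "nat \<Rightarrow> 'e set"
  where "disjoint_family D" and "\<And>n. D n \<subseteq> T" and "\<And>n. \<not> full_at n (D n)"
proof -
  define lvl where "lvl C = (LEAST k. full_at k C)" for C
  have full_lvl: "full_at (lvl C) C" if "has_level C" for C
    using that unfolding lvl_def has_level_def by (rule LeastI_ex)
  define S where
    "S C n = (SOME S. S \<subseteq> T \<and> has_level S \<and> \<not> full_at (Suc (max n (lvl C))) S)" for C n
  have S: "S C n \<subseteq> T \<and> has_level (S C n) \<and> \<not> full_at (Suc (max n (lvl C))) (S C n)" for C n
    unfolding S_def by (rule someI_ex[OF indecomposable_has_level_subset_not_full_at[OF assms]])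
  define C where "C = rec_nat {} (\<lambda>n Cn. Cn \<union> S Cn n)"
  have C_0: "C 0 = {}" and C_Suc: "C (Suc n) = C n \<union> S (C n) n" for n
    unfolding C_def by simp_all
  have C_level: "has_level (C n)" for n
  proof (induction n)
    case (Suc n)
    then show ?case using S[of "C n" n] by (simp add: C_Suc has_level_Un)
  qed (simp add: C_0 has_level_empty)
  have C_mono: "C n \<subseteq> C m" if "n \<le> m" for n m
    by (rule lift_Suc_mono_le[of C, OF _ that]) (auto simp: C_Suc)
  define D where "D n = S (C n) n - C n" for n
  show thesis
  proof
    show "D n \<subseteq> T" for n
      using S[of "C n" n] by (auto simp: D_def)
    show "\<not> full_at n (D n)" for n
    proof
      assume "full_at n (D n)"
      then have "full_at (Suc (max n (lvl (C n)))) (D n \<union> C n)"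
        by (rule full_at_Un[OF _ full_lvl[OF C_level]])
      then have "full_at (Suc (max n (lvl (C n)))) (S (C n) n)"
        by (rule full_at_subset) (auto simp: D_def)
      with S[of "C n" n] show False by blast
    qed
    have "D n \<inter> D m = {}" if "n < m" for n m
    proof -
      have "D n \<subseteq> C m"
        using C_mono[OF Suc_leI[OF that]] by (auto simp: D_def C_Suc)
      then show ?thesis by (auto simp: D_def)
    qed
    then show "disjoint_family D"
      unfolding disjoint_family_on_def by (metis inf_commute linorder_neq_iff)
  qed
qed

lemma not_indecomposable: "\<not> indecomposable T"
proof
  assume T: "indecomposable T"
  then obtain D :: "nat \<Rightarrow> 'e set" where disj: "disjoint_family D" and D_T: "\<And>n. D n \<subseteq> T"
    and D_high: "\<And>n. \<not> full_at n (D n)"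
    using indecomposable_disjoint_family_not_full_at[OF T] by blast
  define W where "W = (\<Union>n\<in>{n. even n}. D n)"
  define W' where "W' = (\<Union>n\<in>{n. odd n}. D n)"
  have "W \<subseteq> T"
    using D_T by (auto simp: W_def)
  moreover have "W' \<subseteq> T - W"
  proof
    fix x
    assume "x \<in> W'"
    then obtain n where "odd n" "x \<in> D n" by (auto simp: W'_def)
    moreover have "D n \<inter> D m = {}" if "even m" for m
    proof -
      have "n \<noteq> m" using \<open>odd n\<close> that by auto
      with disj show ?thesis unfolding disjoint_family_on_def by blast
    qed
    ultimately show "x \<in> T - W"
      using D_T by (auto simp: W_def)
  qed
  moreover have "infinite {n::nat. even n}" "infinite {n::nat. odd n}"
    unfolding infinite_nat_iff_unbounded_le mem_Collect_eq by presburger+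
  then have "\<not> has_level W" "\<not> has_level W'"
    unfolding W_def W'_def by (simp_all add: UN_infinite_not_has_level[OF D_high])
  ultimately show False
    using T has_level_subset unfolding indecomposable_def by blast
qed

theorem Xs_eventually_UNIV: "\<exists>i. Xs i = UNIV"
proof (rule ccontr)
  assume "\<nexists>i. Xs i = UNIV"
  then have "\<not> has_level UNIV"
    unfolding has_level_def full_at_def by blast
  moreover have "\<exists>S\<subseteq>T. \<not> has_level S \<and> \<not> has_level (T - S)" if "\<not> has_level T" for T
    using not_indecomposable[of T] that unfolding indecomposable_def by blast
  ultimately have "\<exists>U :: nat \<Rightarrow> 'e set. disjoint_family U \<and> (\<forall>k. \<not> has_level (U k))"
    by (rule disjoint_family_from_splitting)
  with disjoint_family_has_level show False by blast
qed

end

theorem mainTheorem6: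
  fixes Xs :: "nat \<Rightarrow> ('e \<Rightarrow> 'a::{ab_group_add, times, one, finite}) set"
  assumes "nonassoc_ring_1 TYPE('a)"
    and "\<And>i. Xs i \<subseteq> Xs (Suc i)"
    and "\<And>i. Rop (Xs i) \<subseteq> Xs (Suc i)"
    and "(\<Union>i. Xs i) = UNIV"
  shows "\<exists>i. Xs i = UNIV"
proof -
  interpret Rop_chain Xs
    using assms by unfold_locales
  show ?thesis by (rule Xs_eventually_UNIV)
qed

end
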